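(* Let $m<n$, let $A\in\mathbb{R}^{m\times n}$ and $b\in\mathbb{R}^{m}$, and assume that the system $Ax=b$ has a solution. Partition $A=[B~\tilde{B}]$ with $B\in\mathbb{R}^{m\times m}$ and $\tilde{B}\in\mathbb{R}^{m\times(n-m)}$. Assume that every diagonal entry of $B$ is nonzero and that every row $\tilde{B}_i$ of $\tilde{B}$ is nonzero. Let $D=\operatorname{diag}(B)$ (the diagonal matrix with the diagonal of $B$), $R=B-D$, $N(\tilde{B})=\operatorname{diag}(\|\tilde{B}_1\|_1,\ldots,\|\tilde{B}_m\|_1)$, and let $s(\tilde{B})\in\mathbb{R}^{(n-m)\times m}$ be the matrix whose $(j,i)$ entry is the sign ($1$, $0$ or $-1$) of the $(j,i)$ entry of $\tilde{B}^T$. Starting from any $x^{(0)}=\begin{bmatrix}x_1^{(0)}\\ x_2^{(0)}\end{bmatrix}$ with $x_1^{(0)}\in\mathbb{R}^m$, $x_2^{(0)}\in\mathbb{R}^{n-m}$, define for $k\ge 0$ the generalized Jacobi iteration $$x_2^{(k+1)}=x_2^{(k)}+s(\tilde{B})\,d^{(k)},\qquad d^{(k)}_i=\frac{b_i-B_ix_1^{(k)}-\tilde{B}_ix_2^{(k)}}{m\|\tilde{B}_i\|_1}\ (i=1,\ldots,m),$$ $$x_1^{(k+1)}=D^{-1}\big(-Rx_1^{(k)}+b-\tilde{B}x_2^{(k+1)}\big),\qquad x^{(k+1)}=\begin{bmatrix}x_1^{(k+1)}\\ x_2^{(k+1)}\end{bmatrix},$$ where $B_i,\tilde{B}_i$ denote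 the $i$th rows of $B,\tilde{B}$. If, for some matrix norm $\|\cdot\|$ on $\mathbb{R}^{m\times m}$, $$\|I-BD^{-1}\|<1\quad\text{and}\quad \|mI-\tilde{B}\,s(\tilde{B})\,N(\tilde{B})^{-1}\|<m,$$ then the sequence $(x^{(k)})$ converges and its limit $x=\lim_k x^{(k)}$ is a solution of $Ax=b$.
   Context: $\|\cdot\|_1$ denotes the $\ell_1$-norm of a vector. The $x_2$-update is the iterative method of Wheaton–Awoniyi applied to $\tilde{B}y=b-Bx_1^{(k)}$, and the $x_1$-update is one Jacobi step for $Bz=b-\tilde{B}x_2^{(k+1)}$ starting at $x_1^{(k)}$. *)

theory Defs
  imports "HOL-Analysis.Analysis"
begin

text \<open>A matrix norm on square real matrices: a norm on the vector space of
  matrices which is submultiplicative (Horn--Johnson convention).\<close>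
definition matrix_norm :: "(real^'m^'m \<Rightarrow> real) \<Rightarrow> bool" where
  "matrix_norm nm \<longleftrightarrow>
     (\<forall>M. 0 \<le> nm M) \<and>
     (\<forall>M. nm M = 0 \<longleftrightarrow> M = 0) \<and>
     (\<forall>c M. nm (c *\<^sub>R M) = \<bar>c\<bar> * nm M) \<and>
     (\<forall>M N. nm (M + N) \<le> nm M + nm N) \<and>
     (\<forall>M N. nm (M ** N) \<le> nm M * nm N)"

definition diag_part :: "real^'m^'m \<Rightarrow> real^'m^'m" where
  "diag_part B = (\<chi> i j. if i = j then B $ i $ i else 0)"

definition l1norm :: "real^'n \<Rightarrow> real" where
  "l1norm v = (\<Sum>j\<in>UNIV. \<bar>v $ j\<bar>)"

definition row_l1_diag :: "real^'k^'m \<Rightarrow> real^'m^'m" where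
  "row_l1_diag Bt = (\<chi> i j. if i = j then l1norm (Bt $ i) else 0)"

definition sign_transpose :: "real^'k^'m \<Rightarrow> real^'m^'k" where
  "sign_transpose Bt = (\<chi> j i. sgn (Bt $ i $ j))"

definition vjoin :: "real^'m \<Rightarrow> real^'k \<Rightarrow> real^('m + 'k)" where
  "vjoin x1 x2 = (\<chi> p. case p of Inl i \<Rightarrow> x1 $ i | Inr j \<Rightarrow> x2 $ j)"

end

theory Submission
  imports Defs
begin

text \<open>Let \<open>r k = b - B *v x1 k - Bt *v x2 k\<close> be the residual. The \<open>x2\<close>-update
  multiplies it by \<open>M2 = I - (1/m) Bt s(Bt) N(Bt)\<^sup>-\<^sup>1\<close> and the \<open>x1\<close>-update then by
  \<open>M1 = I - B D\<^sup>-\<^sup>1\<close>, so \<open>r (k + 1) = M1 M2 r k\<close> with \<open>\<parallel>M1 M2\<parallel> < 1\<close>. As all norms on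
  matrices are equivalent, \<open>r k\<close> decays geometrically. The increments of the iterates are
  fixed linear images of \<open>r k\<close>, hence summable, so the iterates converge, and
  \<open>A *v vjoin (x1 k) (x2 k) = b - r k\<close> gives \<open>A x = b\<close> in the limit.\<close>

definition diag_matrix :: "('n::finite \<Rightarrow> 'a::zero) \<Rightarrow> 'a^'n^'n" where
  "diag_matrix d = (\<chi> i j. if i = j then d i else 0)"

lemma diag_matrix_mult:
  "diag_matrix d ** diag_matrix e = diag_matrix (\<lambda>i. d i * e i :: 'a::semiring_1)"
  unfolding diag_matrix_def matrix_matrix_mult_def
  by (simp add: vec_eq_iff if_distrib[where f="\<lambda>x. x * _"] cong: if_cong)

lemma mat_eq_diag_matrix: "mat c = diag_matrix (\<lambda>_. c)"
  unfolding diag_matrix_def mat_def by simp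

lemma diag_matrix_vector_mult:
  "diag_matrix d *v v = (\<chi> i. (d i :: 'a::semiring_1) * v $ i)"
  unfolding diag_matrix_def matrix_vector_mult_def
  by (simp add: vec_eq_iff if_distrib[where f="\<lambda>x. x * _"] cong: if_cong)

lemma matrix_inv_eqI:
  fixes A :: "'a::semiring_1^'n::finite^'n"
  assumes "A ** A' = mat 1" "A' ** A = mat 1"
  shows "matrix_inv A = A'"
proof -
  define X where "X = matrix_inv A"
  have "A ** X = mat 1 \<and> X ** A = mat 1"
    unfolding X_def matrix_inv_def using assms by (metis (mono_tags, lifting) someI_ex)
  then have "X = X ** (A ** A')" by (simp add: assms(1))
  also have "\<dots> = (X ** A) ** A'" by (simp add: matrix_mul_assoc)
  also have "\<dots> = A'" using \<open>A ** X = mat 1 \<and> X ** A = mat 1\<close> by simp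
  finally show ?thesis unfolding X_def .
qed

lemma matrix_inv_diag_matrix:
  fixes d :: "'n::finite \<Rightarrow> 'a::field"
  assumes "\<And>i. d i \<noteq> 0"
  shows "matrix_inv (diag_matrix d) = diag_matrix (\<lambda>i. inverse (d i))"
  using assms by (intro matrix_inv_eqI) (simp_all add: diag_matrix_mult mat_eq_diag_matrix)

definition matrix_unit :: "'n::finite \<Rightarrow> 'n \<Rightarrow> real^'n^'n" where
  "matrix_unit i j = (\<chi> a b. if a = i \<and> b = j then 1 else 0)"

lemma matrix_unit_sandwich:
  "matrix_unit i i ** M ** matrix_unit j j = M $ i $ j *\<^sub>R matrix_unit i j"
  unfolding matrix_unit_def matrix_matrix_mult_def
  by (auto simp: vec_eq_iff if_distrib[where f="\<lambda>x. x * _"] if_distrib[where f="\<lambda>x. _ * x"]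
      sum.If_cases cong: if_cong)

lemma matrix_norm_entry_bound:
  assumes "matrix_norm nm"
  shows "\<exists>K\<ge>0. \<forall>M. \<bar>M $ i $ j\<bar> \<le> K * nm M"
proof -
  from assms have n0: "\<And>M. 0 \<le> nm M" and nz: "\<And>M. nm M = 0 \<longleftrightarrow> M = 0"
    and hom: "\<And>c M. nm (c *\<^sub>R M) = \<bar>c\<bar> * nm M"
    and sub: "\<And>M N. nm (M ** N) \<le> nm M * nm N"
    unfolding matrix_norm_def by blast+
  have "matrix_unit i j \<noteq> 0" unfolding matrix_unit_def by (auto simp: vec_eq_iff)
  then have pos: "nm (matrix_unit i j) > 0" using n0 nz by (metis less_eq_real_def)
  let ?K = "nm (matrix_unit i i) * nm (matrix_unit j j) / nm (matrix_unit i j)"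
  have "\<bar>M $ i $ j\<bar> \<le> ?K * nm M" for M
  proof -
    have "\<bar>M $ i $ j\<bar> * nm (matrix_unit i j) = nm (matrix_unit i i ** M ** matrix_unit j j)"
      by (simp add: hom matrix_unit_sandwich)
    also have "\<dots> \<le> nm (matrix_unit i i) * nm M * nm (matrix_unit j j)"
      by (meson n0 sub mult_right_mono order_trans)
    finally show ?thesis using pos by (simp add: field_simps)
  qed
  moreover have "?K \<ge> 0" using n0 pos by simp
  ultimately show ?thesis by blast
qed

lemma onorm_le_matrix_norm:
  assumes "matrix_norm nm"
  obtains K where "K \<ge> 0" "\<And>M. onorm ((*v) M) \<le> K * nm M"
proof -
  obtain K where K0: "\<And>i j. K i j \<ge> 0" and K: "\<And>i j M. \<bar>M $ i $ j\<bar> \<le> K i j * nm M"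
    using matrix_norm_entry_bound[OF assms] by metis
  have "onorm ((*v) M) \<le> (\<Sum>i\<in>UNIV. \<Sum>j\<in>UNIV. K i j) * nm M" for M
  proof -
    have "onorm ((*v) M) \<le> (\<Sum>i\<in>UNIV. \<Sum>j\<in>UNIV. \<bar>M $ i $ j\<bar>)"
      by (rule onorm_le_matrix_component_sum)
    also have "\<dots> \<le> (\<Sum>i\<in>UNIV. \<Sum>j\<in>UNIV. K i j * nm M)"
      by (intro sum_mono K)
    finally show ?thesis by (simp add: sum_distrib_right)
  qed
  moreover have "(\<Sum>i\<in>UNIV. \<Sum>j\<in>UNIV. K i j) \<ge> 0" by (simp add: K0 sum_nonneg)
  ultimately show thesis using that by blast
qed

lemma matrix_norm_funpow_le:
  assumes "matrix_norm nm"
  shows "nm (((**) P ^^ k) (mat 1)) \<le> nm (mat 1) * nm P ^ k"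
proof (induction k)
  case (Suc k)
  from assms have "0 \<le> nm P" "nm (P ** ((**) P ^^ k) (mat 1)) \<le> nm P * nm (((**) P ^^ k) (mat 1))"
    unfolding matrix_norm_def by blast+
  with Suc show ?case by (simp add: mult_left_mono order_trans mult_ac)
qed simp

lemma geometric_bound_of_matrix_iteration:
  fixes r :: "nat \<Rightarrow> real^'n::finite"
  assumes "matrix_norm nm" "\<And>k. r (Suc k) = P *v r k"
  obtains C where "\<And>k. norm (r k) \<le> C * nm P ^ k"
proof -
  obtain K where "K \<ge> 0" and K: "\<And>M. onorm ((*v) M) \<le> K * nm M"
    using onorm_le_matrix_norm[OF assms(1)] by blast
  have "norm (r k) \<le> K * nm (mat 1) * norm (r 0) * nm P ^ k" for k
  proof -
    let ?Pk = "((**) P ^^ k) (mat 1)"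
    have "r k = ?Pk *v r 0"
      by (induction k) (simp_all add: assms(2) matrix_vector_mul_assoc)
    then have "norm (r k) \<le> onorm ((*v) ?Pk) * norm (r 0)"
      using onorm[OF matrix_vector_mul_bounded_linear] by simp
    also have "\<dots> \<le> K * (nm (mat 1) * nm P ^ k) * norm (r 0)"
      using K[of ?Pk] matrix_norm_funpow_le[OF assms(1), where P=P and k=k] \<open>K \<ge> 0\<close>
      by (meson mult_left_mono mult_right_mono norm_ge_zero order_trans)
    finally show ?thesis by (simp add: mult_ac)
  qed
  then show thesis using that by blast
qed

lemma matrix_norm_mult_lt_1:
  assumes "matrix_norm nm" "nm M < 1" "nm N < 1"
  shows "nm (M ** N) < 1"
proof -
  from assms(1) have "0 \<le> nm M" "nm (M ** N) \<le> nm M * nm N"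
    unfolding matrix_norm_def by blast+
  moreover have "nm M * nm N \<le> nm M"
    using assms(3) \<open>0 \<le> nm M\<close> by (simp add: mult_left_le)
  ultimately show ?thesis using assms(2) by linarith
qed

lemma convergent_of_geometric_increments:
  fixes f :: "nat \<Rightarrow> 'a::banach"
  assumes "\<And>k. norm (f (Suc k) - f k) \<le> C * q ^ k" "0 \<le> q" "q < 1"
  shows "convergent f"
proof -
  have "summable (\<lambda>k. C * q ^ k)" using assms by simp
  then have "summable (\<lambda>k. f (Suc k) - f k)"
    using assms(1) by (rule summable_comparison_test'[where N=0])
  then have "convergent (\<lambda>n. \<Sum>k<n. f (Suc k) - f k)"
    by (simp add: summable_iff_convergent)
  then have "convergent (\<lambda>n. f n - f 0)"
    by (simp add: sum_lessThan_telescope)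
  then show ?thesis
    using convergent_add_const_right_iff[of "\<lambda>n. f n - f 0" "f 0"] by simp
qed

lemma convergent_of_residual_contraction:
  fixes y :: "nat \<Rightarrow> 'a::banach" and r :: "nat \<Rightarrow> real^'n::finite"
  assumes "matrix_norm nm" "nm P < 1"
    and step: "\<And>k. r (Suc k) = P *v r k"
    and increment: "\<And>k. y (Suc k) - y k = F (r k)" "bounded_linear F"
  shows "convergent y" "r \<longlonglongrightarrow> 0"
proof -
  obtain C where C: "\<And>k. norm (r k) \<le> C * nm P ^ k"
    using geometric_bound_of_matrix_iteration[OF assms(1), where r=r and P=P] step by blast
  obtain K where K: "\<And>x. norm (F x) \<le> norm x * K" "K > 0"
    using bounded_linear.pos_bounded[OF increment(2)] by blast
  have q0: "0 \<le> nm P" using assms(1) unfolding matrix_norm_def by blast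
  have "norm (y (Suc k) - y k) \<le> K * (C * nm P ^ k)" for k
  proof -
    have "norm (y (Suc k) - y k) \<le> norm (r k) * K" using K(1) by (simp add: increment(1))
    also have "\<dots> \<le> C * nm P ^ k * K" using C K(2) by (simp add: mult_right_mono)
    finally show ?thesis by (simp add: mult_ac)
  qed
  then show "convergent y"
    unfolding mult.assoc[symmetric] using q0 assms(2) by (rule convergent_of_geometric_increments)
  have "(\<lambda>k. C * nm P ^ k) \<longlonglongrightarrow> 0"
    using q0 assms(2) by (intro tendsto_mult_right_zero LIMSEQ_power_zero) simp
  then show "r \<longlonglongrightarrow> 0"
    by (rule Lim_null_comparison[rotated]) (simp add: C)
qed

lemma diag_part_eq_diag_matrix: "diag_part B = diag_matrix (\<lambda>i. B $ i $ i)"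
  unfolding diag_part_def diag_matrix_def by simp

lemma row_l1_diag_eq_diag_matrix: "row_l1_diag Bt = diag_matrix (\<lambda>i. l1norm (Bt $ i))"
  unfolding row_l1_diag_def diag_matrix_def by simp

lemma l1norm_pos: "v \<noteq> 0 \<Longrightarrow> 0 < l1norm v"
  unfolding l1norm_def by (metis (mono_tags) vec_eq_iff zero_index abs_ge_zero zero_less_abs_iff
      finite UNIV_I sum_pos2)

lemma matrix_vector_mult_vjoin:
  fixes A :: "real^('m::finite + 'k::finite)^'n::finite"
  shows "A *v vjoin u w = (\<chi> i j. A $ i $ Inl j) *v u + (\<chi> i j. A $ i $ Inr j) *v w"
  unfolding vjoin_def matrix_vector_mult_def
  by (simp add: vec_eq_iff UNIV_Plus_UNIV[symmetric] sum.Plus del: UNIV_Plus_UNIV)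

lemma vjoin_diff: "vjoin u w - vjoin u' w' = vjoin (u - u') (w - w')"
  unfolding vjoin_def by (simp add: vec_eq_iff split: sum.split)

lemma bounded_linear_vjoin:
  fixes f :: "'a::euclidean_space \<Rightarrow> real^'m::finite" and g :: "'a \<Rightarrow> real^'k::finite"
  assumes "linear f" "linear g"
  shows "bounded_linear (\<lambda>x. vjoin (f x) (g x))"
proof -
  have "linear (\<lambda>x. vjoin (f x) (g x))"
    using assms unfolding vjoin_def
    by (intro linearI) (simp_all add: vec_eq_iff linear_add linear_scale split: sum.split)
  then show ?thesis by (rule linear_conv_bounded_linear[THEN iffD1])
qed

locale generalized_jacobi =
  fixes B :: "real^'m::finite^'m" and Bt :: "real^'k::finite^'m" and b :: "real^'m"
    and x1 :: "nat \<Rightarrow> real^'m" and x2 :: "nat \<Rightarrow> real^'k"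
  assumes diag_nz: "\<forall>i. B $ i $ i \<noteq> 0"
    and rows_nz: "\<forall>i. Bt $ i \<noteq> 0"
    and step2: "\<forall>k. x2 (Suc k) = x2 k + sign_transpose Bt *v
                   (\<chi> i. (b $ i - (B *v x1 k) $ i - (Bt *v x2 k) $ i) /
                          (real CARD('m) * l1norm (Bt $ i)))"
    and step1: "\<forall>k. x1 (Suc k) = matrix_inv (diag_part B) *v
                   (- ((B - diag_part B) *v x1 k) + b - Bt *v x2 (Suc k))"
begin

definition residual :: "nat \<Rightarrow> real^'m" where
  "residual k = b - B *v x1 k - Bt *v x2 k"

definition x2_gain :: "real^'m^'k" where
  "x2_gain = (1 / real CARD('m)) *\<^sub>R (sign_transpose Bt ** matrix_inv (row_l1_diag Bt))"

definition x2_residual_matrix :: "real^'m^'m" where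
  "x2_residual_matrix = mat 1 - Bt ** x2_gain"

lemma x2_residual_matrix_eq:
  "x2_residual_matrix = (1 / real CARD('m)) *\<^sub>R
     (mat (real CARD('m)) - Bt ** sign_transpose Bt ** matrix_inv (row_l1_diag Bt))"
proof -
  have "Bt ** x2_gain = (1 / real CARD('m)) *\<^sub>R (Bt ** sign_transpose Bt ** matrix_inv (row_l1_diag Bt))"
    by (simp add: x2_gain_def matrix_scalar_ac scalar_matrix_assoc matrix_mul_assoc)
  moreover have "(1 / real CARD('m)) *\<^sub>R mat (real CARD('m)) = (mat 1 :: real^'m^'m)"
    by (simp add: vec_eq_iff mat_def)
  ultimately show ?thesis
    by (simp add: x2_residual_matrix_def scaleR_diff_right)
qed

lemma x2_Suc: "x2 (Suc k) = x2 k + x2_gain *v residual k"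
proof -
  have "l1norm (Bt $ i) \<noteq> 0" for i
    using rows_nz l1norm_pos by (metis less_irrefl)
  then have "(\<chi> i. (b $ i - (B *v x1 k) $ i - (Bt *v x2 k) $ i) /
               (real CARD('m) * l1norm (Bt $ i)))
           = (1 / real CARD('m)) *\<^sub>R (matrix_inv (row_l1_diag Bt) *v residual k)"
    by (simp add: row_l1_diag_eq_diag_matrix matrix_inv_diag_matrix diag_matrix_vector_mult
        residual_def vec_eq_iff field_simps)
  then show ?thesis
    using step2
    by (simp add: x2_gain_def scaleR_matrix_vector_assoc matrix_vector_mul_assoc matrix_scalar_ac
        scalar_matrix_assoc)
qed

lemma residual_half_step: "b - B *v x1 k - Bt *v x2 (Suc k) = x2_residual_matrix *v residual k"
proof -
  have "b - B *v x1 k - Bt *v x2 (Suc k) = residual k - Bt *v (x2_gain *v residual k)"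
    by (simp add: x2_Suc residual_def matrix_vector_right_distrib algebra_simps)
  then show ?thesis
    by (simp add: x2_residual_matrix_def matrix_vector_mult_diff_rdistrib matrix_vector_mul_assoc)
qed

lemma x1_Suc:
  "x1 (Suc k) = x1 k + matrix_inv (diag_part B) *v (x2_residual_matrix *v residual k)"
proof -
  let ?D = "diag_part B"
  have "matrix_inv ?D ** ?D = mat 1"
    using diag_nz by (simp add: diag_part_eq_diag_matrix matrix_inv_diag_matrix diag_matrix_mult
        mat_eq_diag_matrix)
  moreover have "- ((B - ?D) *v x1 k) + b - Bt *v x2 (Suc k)
      = ?D *v x1 k + x2_residual_matrix *v residual k"
    by (simp add: residual_half_step[symmetric] matrix_vector_mult_diff_rdistrib algebra_simps)
  ultimately show ?thesis
    using step1 by (simp add: matrix_vector_right_distrib matrix_vector_mul_assoc)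
qed

lemma residual_Suc:
  "residual (Suc k) =
     ((mat 1 - B ** matrix_inv (diag_part B)) ** x2_residual_matrix) *v residual k"
proof -
  let ?r = "x2_residual_matrix *v residual k"
  have "residual (Suc k) = (b - B *v x1 k - Bt *v x2 (Suc k)) - B *v (matrix_inv (diag_part B) *v ?r)"
    unfolding residual_def x1_Suc by (simp add: matrix_vector_right_distrib algebra_simps)
  also have "\<dots> = ?r - B *v (matrix_inv (diag_part B) *v ?r)"
    by (simp only: residual_half_step)
  finally show ?thesis
    by (simp add: matrix_vector_mult_diff_rdistrib flip: matrix_vector_mul_assoc)
qed

lemma vjoin_Suc_diff:
  "vjoin (x1 (Suc k)) (x2 (Suc k)) - vjoin (x1 k) (x2 k)
     = vjoin ((matrix_inv (diag_part B) ** x2_residual_matrix) *v residual k) (x2_gain *v residual k)"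
  by (simp add: vjoin_diff x1_Suc x2_Suc matrix_vector_mul_assoc)

lemma norm_x2_residual_matrix_lt_1:
  assumes "matrix_norm nm"
    and "nm (mat (real CARD('m)) - Bt ** sign_transpose Bt ** matrix_inv (row_l1_diag Bt))
         < real CARD('m)"
  shows "nm x2_residual_matrix < 1"
proof -
  have "nm x2_residual_matrix
      = nm (mat (real CARD('m)) - Bt ** sign_transpose Bt ** matrix_inv (row_l1_diag Bt)) / real CARD('m)"
    using assms(1) unfolding x2_residual_matrix_eq matrix_norm_def by (simp only: abs_of_pos) simp
  then show ?thesis using assms(2) by simp
qed

lemma convergent_iterates:
  assumes "matrix_norm nm" "nm (mat 1 - B ** matrix_inv (diag_part B)) < 1"
    and "nm x2_residual_matrix < 1"
  shows "convergent (\<lambda>k. vjoin (x1 k) (x2 k))" "residual \<longlonglongrightarrow> 0"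
proof -
  have "nm ((mat 1 - B ** matrix_inv (diag_part B)) ** x2_residual_matrix) < 1"
    using assms by (rule matrix_norm_mult_lt_1)
  moreover have "bounded_linear (\<lambda>r. vjoin ((matrix_inv (diag_part B) ** x2_residual_matrix) *v r)
                                          (x2_gain *v r))"
    by (intro bounded_linear_vjoin matrix_vector_mul_linear)
  ultimately show "convergent (\<lambda>k. vjoin (x1 k) (x2 k))" "residual \<longlonglongrightarrow> 0"
    using convergent_of_residual_contraction[OF assms(1),
        where r=residual and y="\<lambda>k. vjoin (x1 k) (x2 k)"] residual_Suc vjoin_Suc_diff
    by simp_all
qed

end

theorem mainTheorem1:
  fixes A :: "real^('m::finite + 'k::finite)^'m"
    and b :: "real^'m"
    and B :: "real^'m^'m" and Bt :: "real^'k^'m"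
    and x1 :: "nat \<Rightarrow> real^'m" and x2 :: "nat \<Rightarrow> real^'k"
    and nm :: "real^'m^'m \<Rightarrow> real"
  assumes solvable: "\<exists>x. A *v x = b"
    and B_def: "B = (\<chi> i j. A $ i $ Inl j)"
    and Bt_def: "Bt = (\<chi> i j. A $ i $ Inr j)"
    and diag_nz: "\<forall>i. B $ i $ i \<noteq> 0"
    and rows_nz: "\<forall>i. Bt $ i \<noteq> 0"
    and step2: "\<forall>k. x2 (Suc k) = x2 k + sign_transpose Bt *v
                   (\<chi> i. (b $ i - (B *v x1 k) $ i - (Bt *v x2 k) $ i) /
                          (real CARD('m) * l1norm (Bt $ i)))"
    and step1: "\<forall>k. x1 (Suc k) = matrix_inv (diag_part B) *v
                   (- ((B - diag_part B) *v x1 k) + b - Bt *v x2 (Suc k))"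
    and mnorm: "matrix_norm nm"
    and c1: "nm (mat 1 - B ** matrix_inv (diag_part B)) < 1"
    and c2: "nm (mat (real CARD('m)) - Bt ** sign_transpose Bt ** matrix_inv (row_l1_diag Bt))
             < real CARD('m)"
  shows "\<exists>x. ((\<lambda>k. vjoin (x1 k) (x2 k)) \<longlonglongrightarrow> x) \<and> A *v x = b"
proof -
  interpret generalized_jacobi B Bt b x1 x2
    using diag_nz rows_nz step2 step1 by unfold_locales
  have "nm x2_residual_matrix < 1"
    using mnorm c2 by (rule norm_x2_residual_matrix_lt_1)
  then obtain x where lim: "(\<lambda>k. vjoin (x1 k) (x2 k)) \<longlonglongrightarrow> x" and "residual \<longlonglongrightarrow> 0"
    using convergent_iterates[OF mnorm c1] unfolding convergent_def by blast
  have "(\<lambda>k. A *v vjoin (x1 k) (x2 k)) \<longlonglongrightarrow> A *v x"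
    using matrix_vector_mul_bounded_linear lim by (rule bounded_linear.tendsto)
  moreover have "A *v vjoin (x1 k) (x2 k) = b - residual k" for k
    unfolding residual_def unfolding B_def Bt_def matrix_vector_mult_vjoin by simp
  then have "(\<lambda>k. A *v vjoin (x1 k) (x2 k)) \<longlonglongrightarrow> b"
    using tendsto_diff[OF tendsto_const \<open>residual \<longlonglongrightarrow> 0\<close>, of b] by simp
  ultimately have "A *v x = b" by (rule LIMSEQ_unique)
  with lim show ?thesis by blast
qed

end
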